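(* Every jewel and every pyramid contains an induced subgraph isomorphic to $C_5$, to the bull, or to an anchor.
   Context: All graphs are finite and simple. The bull is the graph consisting of a triangle with two disjoint pendant edges. An anchor is a six-vertex graph consisting of a 4-vertex induced path $P$, a vertex $c$ adjacent to all vertices of $P$, and a vertex $a$ adjacent to no vertex of $P$ (with $a,c$ either adjacent or not). A path $p_1-\dots-p_k$ is a sequence of distinct vertices with $p_i$ adjacent to $p_j$ iff $|i-j|=1$; its ends are $p_1,p_k$. A pyramid is a graph formed by the union of a triangle $\{b_1,b_2,b_3\}$, a fourth vertex $a$, and three paths $P_1,P_2,P_3$ such that: for $i=1,2,3$, $P_i$ has ends $a$ and $b_i$; for $1\le i<j\le3$, $a$ is the only vertex in both $P_i$ and $P_j$, and $b_ib_j$ is the only edge between $V(P_i)\setminus\{a\}$ and $V(P_j)\setminus\{a\}$; and $a$ is adjacent to at most one of $b_1,b_2,b_3$. A jewel is a graph $H$ with vertex set $\{v_1,\dots,v_5\}\cup F$ such that $H[F]$ is connected, $v_1v_2,v_2v_3,v_3v_4,v_4v_5,v_5v_1$ are edges, $v_1v_3,v_2v_4,v_1v_4$ are non-edges, $v_2,v_3,v_5$ have no neighbours in $F$, and each of $v_1,v_4$ has a neighbour in $F$. *)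

theory Defs
  imports Main
begin

text \<open>A finite simple graph: a finite vertex set V with a symmetric, irreflexive
adjacency relation E (only its restriction to V matters).\<close>
definition simple_graph :: "'a set \<Rightarrow> ('a \<Rightarrow> 'a \<Rightarrow> bool) \<Rightarrow> bool" where
  "simple_graph V E \<longleftrightarrow> finite V \<and> (\<forall>x y. E x y \<longrightarrow> E y x) \<and> (\<forall>x. \<not> E x x)"

definition has_induced :: "'a set \<Rightarrow> ('a \<Rightarrow> 'a \<Rightarrow> bool) \<Rightarrow> 'b set \<Rightarrow> ('b \<Rightarrow> 'b \<Rightarrow> bool) \<Rightarrow> bool" where
  "has_induced V E W F \<longleftrightarrow>
     (\<exists>f. inj_on f W \<and> f ` W \<subseteq> V \<and> (\<forall>x\<in>W. \<forall>y\<in>W. E (f x) (f y) \<longleftrightarrow> F x y))"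

definition edges_of :: "(nat \<times> nat) list \<Rightarrow> nat \<Rightarrow> nat \<Rightarrow> bool" where
  "edges_of L x y \<longleftrightarrow> (x, y) \<in> set L \<or> (y, x) \<in> set L"

definition C5_edges :: "nat \<Rightarrow> nat \<Rightarrow> bool" where
  "C5_edges = edges_of [(0,1),(1,2),(2,3),(3,4),(4,0)]"

definition bull_edges :: "nat \<Rightarrow> nat \<Rightarrow> bool" where
  "bull_edges = edges_of [(0,1),(1,2),(2,0),(3,0),(4,1)]"

text \<open>Anchor: induced path 0-1-2-3, vertex 4 (= c) complete to the path,
vertex 5 (= a) anticomplete to the path; a c adjacent iff ac.\<close>
definition anchor_edges :: "bool \<Rightarrow> nat \<Rightarrow> nat \<Rightarrow> bool" where
  "anchor_edges ac = edges_of ([(0,1),(1,2),(2,3),(4,0),(4,1),(4,2),(4,3)] @ (if ac then [(4,5)] else []))"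

definition is_path :: "'a set \<Rightarrow> ('a \<Rightarrow> 'a \<Rightarrow> bool) \<Rightarrow> 'a list \<Rightarrow> bool" where
  "is_path V E P \<longleftrightarrow> P \<noteq> [] \<and> distinct P \<and> set P \<subseteq> V \<and>
     (\<forall>i<length P. \<forall>j<length P. E (P ! i) (P ! j) \<longleftrightarrow> (i = j + 1 \<or> j = i + 1))"

definition connected_on :: "('a \<Rightarrow> 'a \<Rightarrow> bool) \<Rightarrow> 'a set \<Rightarrow> bool" where
  "connected_on E F \<longleftrightarrow> F \<noteq> {} \<and>
     (\<forall>x\<in>F. \<forall>y\<in>F. (\<lambda>u v. u \<in> F \<and> v \<in> F \<and> E u v)\<^sup>*\<^sup>* x y)"

definition pyramid :: "'a set \<Rightarrow> ('a \<Rightarrow> 'a \<Rightarrow> bool) \<Rightarrow> bool" where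
  "pyramid V E \<longleftrightarrow> (\<exists>a b1 b2 b3 P1 P2 P3.
     distinct [b1, b2, b3] \<and> E b1 b2 \<and> E b2 b3 \<and> E b1 b3 \<and>
     is_path V E P1 \<and> is_path V E P2 \<and> is_path V E P3 \<and>
     hd P1 = a \<and> last P1 = b1 \<and> hd P2 = a \<and> last P2 = b2 \<and> hd P3 = a \<and> last P3 = b3 \<and>
     V = set P1 \<union> set P2 \<union> set P3 \<and>
     set P1 \<inter> set P2 = {a} \<and> set P1 \<inter> set P3 = {a} \<and> set P2 \<inter> set P3 = {a} \<and>
     (\<forall>x\<in>set P1 - {a}. \<forall>y\<in>set P2 - {a}. E x y \<longleftrightarrow> x = b1 \<and> y = b2) \<and>
     (\<forall>x\<in>set P1 - {a}. \<forall>y\<in>set P3 - {a}. E x y \<longleftrightarrow> x = b1 \<and> y = b3) \<and>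
     (\<forall>x\<in>set P2 - {a}. \<forall>y\<in>set P3 - {a}. E x y \<longleftrightarrow> x = b2 \<and> y = b3) \<and>
     card {b \<in> {b1, b2, b3}. E a b} \<le> 1)"

definition jewel :: "'a set \<Rightarrow> ('a \<Rightarrow> 'a \<Rightarrow> bool) \<Rightarrow> bool" where
  "jewel V E \<longleftrightarrow> (\<exists>v1 v2 v3 v4 v5 F.
     distinct [v1, v2, v3, v4, v5] \<and> F \<inter> {v1, v2, v3, v4, v5} = {} \<and>
     V = {v1, v2, v3, v4, v5} \<union> F \<and> connected_on E F \<and>
     E v1 v2 \<and> E v2 v3 \<and> E v3 v4 \<and> E v4 v5 \<and> E v5 v1 \<and>
     \<not> E v1 v3 \<and> \<not> E v2 v4 \<and> \<not> E v1 v4 \<and>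
     (\<forall>f\<in>F. \<not> E v2 f \<and> \<not> E v3 f \<and> \<not> E v5 f) \<and>
     (\<exists>f\<in>F. E v1 f) \<and> (\<exists>f\<in>F. E v4 f))"

end

theory Submission
  imports Defs
begin

text \<open>In a jewel, the edges from v5 to v2 and v3 decide: with neither, v1..v5 is an induced C5;
with exactly one, the triangle it forms has a pendant into F and a pendant on the cycle (a bull).
With both, a common F-neighbour of v1 and v4 closes a C5; otherwise a walk in F from a neighbour
of v1 to a neighbour of v4 has a first vertex w off the neighbourhood of v1, and w either closes a
C5 through v1, its predecessor and v4, or together with the path v1-v2-v3-v4 and its apex v5 forms
an anchor. In a pyramid at most one b_i is adjacent to a, so two legs have a vertex other than a
next to their end; these two vertices are pendants on the triangle and give a bull.\<close>

definition has_C5_bull_or_anchor :: "'a set \<Rightarrow> ('a \<Rightarrow> 'a \<Rightarrow> bool) \<Rightarrow> bool" where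
  "has_C5_bull_or_anchor V E \<longleftrightarrow>
     has_induced V E {0..<5} C5_edges \<or> has_induced V E {0..<5} bull_edges \<or>
     (\<exists>ac. has_induced V E {0..<6} (anchor_edges ac))"

lemma has_induced_listI:
  assumes "distinct xs" "set xs \<subseteq> V" "n = length xs"
    and "\<forall>i<n. \<forall>j<n. E (xs ! i) (xs ! j) \<longleftrightarrow> F i j"
  shows "has_induced V E {0..<n} F"
  unfolding has_induced_def
proof (intro exI conjI)
  show "inj_on ((!) xs) {0..<n}" using assms by (auto intro!: inj_on_nth)
  show "(!) xs ` {0..<n} \<subseteq> V" using assms by auto
  show "\<forall>x\<in>{0..<n}. \<forall>y\<in>{0..<n}. E (xs ! x) (xs ! y) = F x y" using assms by auto
qed

lemma has_induced_C5I:
  assumes sym: "\<And>x y. E x y \<Longrightarrow> E y x" and irr: "\<And>x. \<not> E x x"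
    and "{p, q, r, s, t} \<subseteq> V" "distinct [p, q, r, s, t]"
    and "E p q" "E q r" "E r s" "E s t" "E t p"
    and "\<not> E p r" "\<not> E p s" "\<not> E q s" "\<not> E q t" "\<not> E r t"
  shows "has_induced V E {0..<5} C5_edges"
proof (rule has_induced_listI[where xs = "[p, q, r, s, t]"])
  have "E q p" "E r q" "E s r" "E t s" "E p t"
    "\<not> E r p" "\<not> E s p" "\<not> E s q" "\<not> E t q" "\<not> E t r"
    using assms sym by blast+
  then show "\<forall>i<5. \<forall>j<5. E ([p, q, r, s, t] ! i) ([p, q, r, s, t] ! j) \<longleftrightarrow> C5_edges i j"
    unfolding C5_edges_def edges_of_def
    using assms irr by (simp add: less_Suc_eq numeral_eq_Suc)
qed (use assms in auto)

lemma has_induced_bullI: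
  assumes sym: "\<And>x y. E x y \<Longrightarrow> E y x" and irr: "\<And>x. \<not> E x x"
    and "{p, q, r, s, t} \<subseteq> V" "distinct [p, q, r, s, t]"
    and "E p q" "E q r" "E r p" "E s p" "E t q"
    and "\<not> E s q" "\<not> E s r" "\<not> E t p" "\<not> E t r" "\<not> E s t"
  shows "has_induced V E {0..<5} bull_edges"
proof (rule has_induced_listI[where xs = "[p, q, r, s, t]"])
  have "E q p" "E r q" "E p r" "E p s" "E q t"
    "\<not> E q s" "\<not> E r s" "\<not> E p t" "\<not> E r t" "\<not> E t s"
    using assms sym by blast+
  then show "\<forall>i<5. \<forall>j<5. E ([p, q, r, s, t] ! i) ([p, q, r, s, t] ! j) \<longleftrightarrow> bull_edges i j"
    unfolding bull_edges_def edges_of_def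
    using assms irr by (simp add: less_Suc_eq numeral_eq_Suc)
qed (use assms in auto)

lemma has_induced_anchorI:
  assumes sym: "\<And>x y. E x y \<Longrightarrow> E y x" and irr: "\<And>x. \<not> E x x"
    and "{p, q, r, s, t, u} \<subseteq> V" "distinct [p, q, r, s, t, u]"
    and "E p q" "E q r" "E r s" "E t p" "E t q" "E t r" "E t s"
    and "\<not> E p r" "\<not> E p s" "\<not> E q s"
    and "\<not> E u p" "\<not> E u q" "\<not> E u r" "\<not> E u s" "\<not> E u t"
  shows "has_induced V E {0..<6} (anchor_edges False)"
proof (rule has_induced_listI[where xs = "[p, q, r, s, t, u]"])
  have "E q p" "E r q" "E s r" "E p t" "E q t" "E r t" "E s t"
    "\<not> E r p" "\<not> E s p" "\<not> E s q"
    "\<not> E p u" "\<not> E q u" "\<not> E r u" "\<not> E s u" "\<not> E t u"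
    using assms sym by blast+
  then show "\<forall>i<6. \<forall>j<6. E ([p, q, r, s, t, u] ! i) ([p, q, r, s, t, u] ! j)
      \<longleftrightarrow> anchor_edges False i j"
    unfolding anchor_edges_def edges_of_def
    using assms irr by (simp add: less_Suc_eq numeral_eq_Suc)
qed (use assms in auto)

lemma is_path_last_neighbour:
  assumes path: "is_path V E P" and ends: "hd P \<noteq> last P"
  shows "\<exists>c\<in>set P. c \<noteq> last P \<and> E c (last P)"
proof -
  let ?n = "length P"
  have "P \<noteq> []" and dist: "distinct P"
    and adj: "\<forall>i<?n. \<forall>j<?n. E (P ! i) (P ! j) \<longleftrightarrow> (i = j + 1 \<or> j = i + 1)"
    using path unfolding is_path_def by auto
  moreover have "?n \<noteq> 1"
    using ends by (auto simp: length_Suc_conv)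
  ultimately have n: "?n \<ge> 2" by (cases ?n) auto
  have last: "last P = P ! (?n - 1)" using \<open>P \<noteq> []\<close> by (simp add: last_conv_nth)
  have "E (P ! (?n - 2)) (P ! (?n - 1))" using adj n by (simp add: Suc_diff_Suc numeral_2_eq_2)
  moreover have "P ! (?n - 2) \<noteq> P ! (?n - 1)" using dist n by (simp add: nth_eq_iff_index_eq)
  moreover have "P ! (?n - 2) \<in> set P" using n by simp
  ultimately show ?thesis unfolding last by blast
qed

lemma rtranclp_exit_step:
  assumes "R\<^sup>*\<^sup>* x y" "P x" "\<not> P y"
  shows "\<exists>u w. R u w \<and> P u \<and> \<not> P w"
  using assms by (induction rule: rtranclp_induct) auto

locale jewel_graph =
  fixes V :: "'a set" and E :: "'a \<Rightarrow> 'a \<Rightarrow> bool" and v1 v2 v3 v4 v5 :: 'a and F :: "'a set"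
  assumes sym: "\<And>x y. E x y \<Longrightarrow> E y x" and irr: "\<And>x. \<not> E x x"
    and distinct: "distinct [v1, v2, v3, v4, v5]"
    and F_disjoint: "F \<inter> {v1, v2, v3, v4, v5} = {}"
    and V_eq: "V = {v1, v2, v3, v4, v5} \<union> F"
    and F_connected: "connected_on E F"
    and cycle: "E v1 v2" "E v2 v3" "E v3 v4" "E v4 v5" "E v5 v1"
    and non_chords: "\<not> E v1 v3" "\<not> E v2 v4" "\<not> E v1 v4"
    and F_anticomplete: "\<forall>f\<in>F. \<not> E v2 f \<and> \<not> E v3 f \<and> \<not> E v5 f"
    and v1_F_neighbour: "\<exists>f\<in>F. E v1 f"
    and v4_F_neighbour: "\<exists>f\<in>F. E v4 f"

lemma jewel_graph_obtain:
  assumes "simple_graph V E" "jewel V E"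
  obtains v1 v2 v3 v4 v5 F where "jewel_graph V E v1 v2 v3 v4 v5 F"
  using assms unfolding jewel_def simple_graph_def jewel_graph_def by metis

context jewel_graph
begin

lemma mirror_image: "jewel_graph V E v4 v3 v2 v1 v5 F"
  using sym irr distinct F_disjoint V_eq F_connected cycle non_chords F_anticomplete
    v1_F_neighbour v4_F_neighbour
  by unfold_locales (auto simp: insert_commute)

lemma F_vertex:
  assumes "f \<in> F"
  shows "\<not> E f v2" "\<not> E f v3" "\<not> E f v5" "f \<notin> {v1, v2, v3, v4, v5}" "f \<in> V"
  using assms F_anticomplete F_disjoint V_eq sym by blast+

lemma C5_if_v5_anticomplete:
  assumes "\<not> E v5 v2" "\<not> E v5 v3"
  shows "has_induced V E {0..<5} C5_edges"
  by (rule has_induced_C5I[OF sym irr, where p = v1 and q = v2 and r = v3 and s = v4 and t = v5])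
    (use assms V_eq distinct cycle non_chords sym in auto)

lemma bull_if_v5_adjacent_v2_only:
  assumes "E v5 v2" "\<not> E v5 v3"
  shows "has_induced V E {0..<5} bull_edges"
proof -
  obtain f where f: "f \<in> F" "E v1 f" using v1_F_neighbour by blast
  show ?thesis
    by (rule has_induced_bullI[OF sym irr, where p = v1 and q = v2 and r = v5 and s = f and t = v3])
      (use assms V_eq distinct cycle non_chords sym f F_vertex[OF f(1)] in auto)
qed

lemma C5_if_common_F_neighbour:
  assumes "f \<in> F" "E v1 f" "E v4 f"
  shows "has_induced V E {0..<5} C5_edges"
  by (rule has_induced_C5I[OF sym irr, where p = v1 and q = f and r = v4 and s = v3 and t = v2])
    (use assms V_eq distinct cycle non_chords sym F_vertex[OF assms(1)] in auto)

lemma C5_or_anchor_if_v5_adjacent_v2_v3: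
  assumes "E v5 v2" "E v5 v3" and no_common: "\<not> (\<exists>f\<in>F. E v1 f \<and> E v4 f)"
  shows "has_induced V E {0..<5} C5_edges \<or> has_induced V E {0..<6} (anchor_edges False)"
proof -
  let ?R = "\<lambda>u v. u \<in> F \<and> v \<in> F \<and> E u v"
  obtain f g where fg: "f \<in> F" "E v1 f" "g \<in> F" "E v4 g"
    using v1_F_neighbour v4_F_neighbour by blast
  have "?R\<^sup>*\<^sup>* f g" using F_connected fg unfolding connected_on_def by blast
  moreover have "\<not> E v1 g" using no_common fg sym by blast
  ultimately obtain u w where uw: "u \<in> F" "w \<in> F" "E u w" "E v1 u" "\<not> E v1 w"
    using rtranclp_exit_step[of ?R f g "E v1"] fg by blast
  have "\<not> E v4 u" using no_common uw by blast
  show ?thesis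
  proof (cases "E v4 w")
    case True
    have "u \<noteq> w" using uw irr by auto
    then have "has_induced V E {0..<5} C5_edges"
      by (intro has_induced_C5I[OF sym irr, where p = v1 and q = u and r = w and s = v4 and t = v5])
        (use True uw \<open>\<not> E v4 u\<close> V_eq distinct cycle non_chords sym
           F_vertex[OF uw(1)] F_vertex[OF uw(2)] in auto)
    then show ?thesis ..
  next
    case False
    have "has_induced V E {0..<6} (anchor_edges False)"
      by (rule has_induced_anchorI[OF sym irr, where p = v1 and q = v2 and r = v3
          and s = v4 and t = v5 and u = w])
        (use assms False uw V_eq distinct cycle non_chords sym F_vertex[OF uw(2)] in auto)
    then show ?thesis ..
  qed
qed

theorem C5_bull_or_anchor: "has_C5_bull_or_anchor V E"
proof -
  have mirror_bull: "E v5 v3 \<Longrightarrow> \<not> E v5 v2 \<Longrightarrow> has_induced V E {0..<5} bull_edges"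
    using jewel_graph.bull_if_v5_adjacent_v2_only[OF mirror_image] .
  show ?thesis
    unfolding has_C5_bull_or_anchor_def
    using C5_if_v5_anticomplete bull_if_v5_adjacent_v2_only mirror_bull
      C5_if_common_F_neighbour C5_or_anchor_if_v5_adjacent_v2_v3
    by blast
qed

end

lemma bull_of_triangle_legs:
  assumes sym: "\<And>x y. E x y \<Longrightarrow> E y x" and irr: "\<And>x. \<not> E x x"
    and triangle: "E bi bj" "E bj bk" "E bi bk"
    and ends: "bi \<in> Li" "bj \<in> Lj" "bk \<in> Lk" and "Li \<union> Lj \<union> Lk \<subseteq> V"
    and ij: "\<forall>x\<in>Li. \<forall>y\<in>Lj. E x y \<longleftrightarrow> x = bi \<and> y = bj"
    and ik: "\<forall>x\<in>Li. \<forall>y\<in>Lk. E x y \<longleftrightarrow> x = bi \<and> y = bk"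
    and jk: "\<forall>x\<in>Lj. \<forall>y\<in>Lk. E x y \<longleftrightarrow> x = bj \<and> y = bk"
    and c: "c \<in> Li" "c \<noteq> bi" "E c bi" and d: "d \<in> Lj" "d \<noteq> bj" "E d bj"
  shows "has_induced V E {0..<5} bull_edges"
proof (rule has_induced_bullI[OF sym irr, where p = bi and q = bj and r = bk and s = c and t = d])
  have nc: "\<not> E c bj" "\<not> E c bk" "\<not> E c d"
    using ij ik c(1,2) d(1) ends by auto
  have nd: "\<not> E d bi" "\<not> E d bk"
    using ij jk d(1,2) ends sym by blast+
  have "c \<noteq> bj" "c \<noteq> bk" "d \<noteq> bi" "d \<noteq> bk" "c \<noteq> d"
    using nc nd triangle c(3) sym by metis+
  moreover have "bi \<noteq> bj" "bj \<noteq> bk" "bi \<noteq> bk" using triangle irr by auto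
  ultimately show "distinct [bi, bj, bk, c, d]" using c(2) d(2) by auto
  show "\<not> E c bj" "\<not> E c bk" "\<not> E d bi" "\<not> E d bk" "\<not> E c d" using nc nd by auto
qed (use assms in auto)

lemma pyramid_has_bull:
  assumes "simple_graph V E" "pyramid V E"
  shows "has_induced V E {0..<5} bull_edges"
proof -
  have sym: "\<And>x y. E x y \<Longrightarrow> E y x" and irr: "\<And>x. \<not> E x x"
    using assms(1) unfolding simple_graph_def by auto
  obtain a b1 b2 b3 P1 P2 P3 where "distinct [b1, b2, b3]"
    and triangle: "E b1 b2" "E b2 b3" "E b1 b3"
    and paths: "is_path V E P1" "is_path V E P2" "is_path V E P3"
    and ends: "hd P1 = a" "last P1 = b1" "hd P2 = a" "last P2 = b2" "hd P3 = a" "last P3 = b3"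
    and V_eq: "V = set P1 \<union> set P2 \<union> set P3"
    and "set P1 \<inter> set P2 = {a}" "set P1 \<inter> set P3 = {a}" "set P2 \<inter> set P3 = {a}"
    and x12: "\<forall>x\<in>set P1 - {a}. \<forall>y\<in>set P2 - {a}. E x y \<longleftrightarrow> x = b1 \<and> y = b2"
    and x13: "\<forall>x\<in>set P1 - {a}. \<forall>y\<in>set P3 - {a}. E x y \<longleftrightarrow> x = b1 \<and> y = b3"
    and x23: "\<forall>x\<in>set P2 - {a}. \<forall>y\<in>set P3 - {a}. E x y \<longleftrightarrow> x = b2 \<and> y = b3"
    and apex: "card {b \<in> {b1, b2, b3}. E a b} \<le> 1"
    using assms(2) unfolding pyramid_def by (elim exE conjE) (rule that, assumption+)
  have x21: "\<forall>x\<in>set P2 - {a}. \<forall>y\<in>set P1 - {a}. E x y \<longleftrightarrow> x = b2 \<and> y = b1"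
    using x12 sym by blast
  have x31: "\<forall>x\<in>set P3 - {a}. \<forall>y\<in>set P1 - {a}. E x y \<longleftrightarrow> x = b3 \<and> y = b1"
    using x13 sym by blast
  have x32: "\<forall>x\<in>set P3 - {a}. \<forall>y\<in>set P2 - {a}. E x y \<longleftrightarrow> x = b3 \<and> y = b2"
    using x23 sym by blast
  have apex_unique: "x = y" if "x \<in> {b1, b2, b3}" "y \<in> {b1, b2, b3}" "E a x" "E a y" for x y
  proof (rule ccontr)
    assume "x \<noteq> y"
    then have "card {x, y} \<le> card {b \<in> {b1, b2, b3}. E a b}"
      using that by (intro card_mono) auto
    then show False using apex \<open>x \<noteq> y\<close> by simp
  qed
  have "a \<noteq> b1" "a \<noteq> b2" "a \<noteq> b3"
    using apex_unique[of b2 b3] apex_unique[of b1 b3] apex_unique[of b1 b2] triangle sym irr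
    by auto
  then have legs: "b1 \<in> set P1 - {a}" "b2 \<in> set P2 - {a}" "b3 \<in> set P3 - {a}"
    using paths ends unfolding is_path_def by (auto intro: last_in_set)
  obtain c1 where c1: "c1 \<in> set P1" "c1 \<noteq> b1" "E c1 b1"
    using is_path_last_neighbour[OF paths(1)] ends(1,2) \<open>a \<noteq> b1\<close> by auto
  obtain c2 where c2: "c2 \<in> set P2" "c2 \<noteq> b2" "E c2 b2"
    using is_path_last_neighbour[OF paths(2)] ends(3,4) \<open>a \<noteq> b2\<close> by auto
  obtain c3 where c3: "c3 \<in> set P3" "c3 \<noteq> b3" "E c3 b3"
    using is_path_last_neighbour[OF paths(3)] ends(5,6) \<open>a \<noteq> b3\<close> by auto
  have "c1 \<noteq> a \<and> c2 \<noteq> a \<or> c1 \<noteq> a \<and> c3 \<noteq> a \<or> c2 \<noteq> a \<and> c3 \<noteq> a"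
    using apex_unique[of b1 b2] apex_unique[of b1 b3] apex_unique[of b2 b3]
      c1(3) c2(3) c3(3) triangle irr by auto
  moreover have "c1 \<noteq> a \<Longrightarrow> c2 \<noteq> a \<Longrightarrow> ?thesis"
    by (rule bull_of_triangle_legs[OF sym irr triangle legs(1,2,3) _ x12 x13 x23])
      (use c1 c2 V_eq in auto)
  moreover have "c1 \<noteq> a \<Longrightarrow> c3 \<noteq> a \<Longrightarrow> ?thesis"
    by (rule bull_of_triangle_legs[OF sym irr triangle(3) triangle(2)[THEN sym] triangle(1)
          legs(1,3,2) _ x13 x12 x32]) (use c1 c3 V_eq in auto)
  moreover have "c2 \<noteq> a \<Longrightarrow> c3 \<noteq> a \<Longrightarrow> ?thesis"
    by (rule bull_of_triangle_legs[OF sym irr triangle(2) triangle(3)[THEN sym] triangle(1)[THEN sym]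
          legs(2,3,1) _ x23 x21 x31]) (use c2 c3 V_eq in auto)
  ultimately show ?thesis by blast
qed

theorem theorem1p6:
  fixes V :: "'a set" and E :: "'a \<Rightarrow> 'a \<Rightarrow> bool"
  assumes "simple_graph V E"
    and "jewel V E \<or> pyramid V E"
  shows "has_induced V E {0..<5} C5_edges \<or> has_induced V E {0..<5} bull_edges \<or>
         (\<exists>ac. has_induced V E {0..<6} (anchor_edges ac))"
proof -
  have "has_C5_bull_or_anchor V E" if "jewel V E"
    using jewel_graph_obtain[OF assms(1) that] jewel_graph.C5_bull_or_anchor by metis
  moreover have "has_C5_bull_or_anchor V E" if "pyramid V E"
    using pyramid_has_bull[OF assms(1) that] unfolding has_C5_bull_or_anchor_def by blast
  ultimately show ?thesis
    using assms(2) unfolding has_C5_bull_or_anchor_def by blast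
qed

end
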